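(* Let $x,y>0$, let $\theta\in(0,\frac{\pi}{2})$, and let $\mathbf z=(xy\cos\theta,x^2,y^2)$. For $\theta\in(\arccos\frac{2}{\pi},\frac{\pi}{3})$ let $\beta_1\in(1,\infty)$ be the unique solution of $$\arccos\left(\frac{1}{\beta_1}\right)=\frac{(\beta_1+\cos\theta)\sqrt{\beta_1^2-1}}{\beta_1(\beta_1\cos\theta+1)}.$$ Let $\Lambda^*_-$ be as defined in the context. Then $\Lambda^*_-(\mathbf z)=\frac{x^2}{2}+\frac{y^2}{2}-1-\ln(xy)+E(\theta)$, where: - $E(\theta)=0$ if $\theta\in(0,\arccos\frac{2}{\pi}]$; - $E(\theta)=\ln\left(\frac{\pi\beta_1(\beta_1\cos\theta+1)}{2(\cos\theta+\beta_1)^2}\right)$ if $\theta\in(\arccos\frac{2}{\pi},\frac{\pi}{3})$; - $E(\theta)=\ln\left(\frac{\pi}{2(1+\cos\theta)}\right)$ if $\theta\in[\frac{\pi}{3},\frac{\pi}{2})$.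
   Context: For $\boldsymbol\lambda=(\lambda_1,\lambda_2,\lambda_3)\in\mathbb{R}^3$ let $D=\lambda_1^2-(1-2\lambda_2)(1-2\lambda_3)$, and let $$S=\{\boldsymbol\lambda:\lambda_2<\tfrac12,\ \lambda_3<\tfrac12,\ D<0\}.$$ For $\boldsymbol\lambda\in S$ put $$\Lambda(\boldsymbol\lambda)=\ln\left(\pi+2\arctan\left(\frac{\lambda_1}{\sqrt{-D}}\right)\right)-\ln\pi-\tfrac12\ln(-D).$$ This is the log moment generating function of $(\hat X\hat Y,\hat X^2,\hat Y^2)$ for independent half-normal $\hat X,\hat Y$. Define $$\Lambda^*_-(\mathbf z)=\sup_{\boldsymbol\lambda\in S,\ \lambda_1<0}\{\langle\boldsymbol\lambda,\mathbf z\rangle-\Lambda(\boldsymbol\lambda)\}.$$ *)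

theory Defs
  imports "HOL-Analysis.Analysis"
begin

definition Dd :: "real \<times> real \<times> real \<Rightarrow> real" where
  "Dd l = (case l of (l1, l2, l3) \<Rightarrow> l1^2 - (1 - 2*l2) * (1 - 2*l3))"

definition SS :: "(real \<times> real \<times> real) set" where
  "SS = {(l1, l2, l3). l2 < 1/2 \<and> l3 < 1/2 \<and> Dd (l1, l2, l3) < 0}"

definition Lam :: "real \<times> real \<times> real \<Rightarrow> real" where
  "Lam l = (case l of (l1, l2, l3) \<Rightarrow>
     ln (pi + 2 * arctan (l1 / sqrt (- Dd l))) - ln pi - (1/2) * ln (- Dd l))"

definition ip3 :: "real \<times> real \<times> real \<Rightarrow> real \<times> real \<times> real \<Rightarrow> real" where
  "ip3 l z = (case l of (l1, l2, l3) \<Rightarrow> case z of (z1, z2, z3) \<Rightarrow> l1*z1 + l2*z2 + l3*z3)"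

text \<open>Lambda^*_-, as an extended real supremum (so it is always defined).\<close>
definition LamStarMinus :: "real \<times> real \<times> real \<Rightarrow> ereal" where
  "LamStarMinus z = (SUP l \<in> {l \<in> SS. fst l < 0}. ereal (ip3 l z - Lam l))"

definition beta1 :: "real \<Rightarrow> real" where
  "beta1 \<theta> = (THE b. 1 < b \<and>
      arccos (1 / b) = (b + cos \<theta>) * sqrt (b^2 - 1) / (b * (b * cos \<theta> + 1)))"

end

theory Submission
  imports Defs
begin

text \<open>
  For \<open>\<lambda>\<^sub>1 < 0\<close> in \<open>S\<close> put \<open>a = 1 - 2\<lambda>\<^sub>2\<close>, \<open>b = 1 - 2\<lambda>\<^sub>3\<close>, \<open>m = \<surd>(ab)\<close> and write
  \<open>\<lambda>\<^sub>1 = -m cos u\<close>, \<open>\<surd>(-D) = m sin u\<close> with \<open>u \<in> (0, \<pi>/2)\<close>; then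
  \<open>\<Lambda>(\<lambda>) = ln (2u/\<pi>) - ln (m sin u)\<close>. For fixed \<open>u\<close>, AM-GM and \<open>ln t \<le> t - 1\<close> bound
  \<open>\<langle>\<lambda>, z\<rangle> - \<Lambda>(\<lambda>)\<close> by \<open>x\<^sup>2/2 + y\<^sup>2/2 - 1 - ln (xy) + G(c, u)\<close>, where \<open>c = cos \<theta>\<close> and
  \<open>G(c, u) = ln (\<pi> sin u / (2u (1 + c cos u)))\<close>, with equality for a suitable choice of \<open>a, b\<close>.
  So \<open>\<Lambda>\<^sup>*\<^sub>-(z)\<close> is that constant plus \<open>sup\<^sub>u G(c, u)\<close>.

  The derivative of \<open>G\<close> has the sign of \<open>K(u) = u (cos u + c) - sin u (1 + c cos u)\<close>.
  We have \<open>K(0) = 0\<close>, \<open>K(\<pi>/2) = c\<pi>/2 - 1\<close> and \<open>K' = sin u (2c sin u - u)\<close>; as \<open>sin u / u\<close>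
  decreases, \<open>K\<close> first increases and then decreases. Hence \<open>G\<close> increases to \<open>G(\<pi>/2) = 0\<close> if
  \<open>c \<ge> 2/\<pi>\<close>, decreases from \<open>G(0\<^sup>+) = ln (\<pi> / (2 (1 + c)))\<close> if \<open>c \<le> 1/2\<close>, and otherwise is
  maximal at the unique zero \<open>u\<^sub>1\<close> of \<open>K\<close>, which corresponds to \<open>\<beta>\<^sub>1 = 1 / cos u\<^sub>1\<close>.
\<close>

definition angle_profile :: "real \<Rightarrow> real \<Rightarrow> real" where
  "angle_profile c u = ln pi + ln (sin u) - ln 2 - ln u - ln (1 + c * cos u)"

definition angle_profile_numer :: "real \<Rightarrow> real \<Rightarrow> real" where
  "angle_profile_numer c u = u * (cos u + c) - sin u * (1 + c * cos u)"

lemma one_plus_mult_cos_pos: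
  fixes c u :: real
  assumes "-1 < c" "0 \<le> cos u"
  shows "0 < 1 + c * cos u"
proof (cases "0 \<le> c")
  case True
  then show ?thesis using assms by (simp add: add_pos_nonneg)
next
  case False
  then have "c \<le> c * cos u" using cos_le_one[of u] by (simp add: mult_le_cancel_left1)
  then show ?thesis using assms by linarith
qed

lemma has_real_derivative_angle_profile:
  assumes "0 < u" "u \<le> pi/2" "-1 < c"
  shows "(angle_profile c has_real_derivative
           angle_profile_numer c u / (u * sin u * (1 + c * cos u))) (at u)"
proof -
  have s: "sin u > 0" using assms by (intro sin_gt_zero) auto
  have d: "1 + c * cos u > 0" using assms by (intro one_plus_mult_cos_pos cos_ge_zero) auto
  have "(angle_profile c has_real_derivative
          cos u / sin u - 1 / u - (c * - sin u) / (1 + c * cos u)) (at u)"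
    unfolding angle_profile_def [abs_def] using s d assms by (auto intro!: derivative_eq_intros)
  moreover have "cos u / sin u - 1 / u - (c * - sin u) / (1 + c * cos u)
      = angle_profile_numer c u / (u * sin u * (1 + c * cos u))"
  proof -
    have "c * (cos u * cos u) + c * (sin u * sin u) = c"
      by (metis distrib_left mult.right_neutral sin_cos_squared_add3)
    then have "cos u / sin u - (c * - sin u) / (1 + c * cos u)
        = (cos u + c) / (sin u * (1 + c * cos u))"
      using s d by (simp add: field_simps)
    moreover have "(cos u + c) / (sin u * e) - 1 / u
        = (u * (cos u + c) - sin u * e) / (u * sin u * e)" if "e > 0" for e
      using s that assms by (simp add: field_simps)
    ultimately show ?thesis using d unfolding angle_profile_numer_def by fastforce
  qed
  ultimately show ?thesis by simp
qed

lemma has_real_derivative_angle_profile_numer: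
  "(angle_profile_numer c has_real_derivative sin u * (2 * c * sin u - u)) (at u)"
proof -
  have "(angle_profile_numer c has_real_derivative
          (cos u + c) + u * (- sin u) - (cos u * (1 + c * cos u) + sin u * (c * - sin u))) (at u)"
    unfolding angle_profile_numer_def [abs_def] by (auto intro!: derivative_eq_intros)
  moreover have "c * (cos u)\<^sup>2 + c * (sin u)\<^sup>2 = c"
    by (metis distrib_left mult.right_neutral sin_cos_squared_add2)
  then have "(cos u + c) + u * (- sin u) - (cos u * (1 + c * cos u) + sin u * (c * - sin u))
      = sin u * (2 * c * sin u - u)"
    by (simp add: algebra_simps power2_eq_square)
  ultimately show ?thesis by simp
qed

lemma continuous_on_angle_profile_numer: "continuous_on A (angle_profile_numer c)"
  unfolding angle_profile_numer_def [abs_def] by (intro continuous_intros)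

lemma continuous_on_angle_profile:
  assumes "0 < a" "b \<le> pi/2" "-1 < c"
  shows "continuous_on {a..b} (angle_profile c)"
  using assms
  by (intro continuous_at_imp_continuous_on ballI DERIV_isCont[OF has_real_derivative_angle_profile])
     auto

lemma angle_profile_numer_0 [simp]: "angle_profile_numer c 0 = 0"
  unfolding angle_profile_numer_def by simp

lemma angle_profile_numer_pi_half [simp]: "angle_profile_numer c (pi/2) = pi/2 * c - 1"
  unfolding angle_profile_numer_def by simp

lemma angle_profile_pi_half [simp]: "angle_profile c (pi/2) = 0"
  unfolding angle_profile_def by (simp add: ln_div)

subsection \<open>Monotonicity of the profile\<close>

lemma mult_cos_less_sin:
  fixes v :: real
  assumes "0 < v" "v \<le> pi/2"
  shows "v * cos v < sin v"
proof -
  have "(\<lambda>v. sin v - v * cos v) 0 < (\<lambda>v. sin v - v * cos v) v"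
  proof (rule DERIV_pos_imp_increasing_open[OF assms(1)])
    fix t assume t: "0 < t" "t < v"
    have "((\<lambda>v. sin v - v * cos v) has_real_derivative t * sin t) (at t)"
      by (auto intro!: derivative_eq_intros)
    moreover have "sin t > 0" using t assms by (intro sin_gt_zero) auto
    ultimately show "\<exists>y. ((\<lambda>v. sin v - v * cos v) has_real_derivative y) (at t) \<and> y > 0"
      using t by auto
  qed (intro continuous_intros)
  then show ?thesis by simp
qed

lemma sin_div_strict_decreasing:
  fixes t t' :: real
  assumes "0 < t" "t < t'" "t' \<le> pi/2"
  shows "sin t' / t' < sin t / t"
proof (rule DERIV_neg_imp_decreasing_open[OF assms(2)])
  fix v assume v: "t < v" "v < t'"
  have "((\<lambda>v. sin v / v) has_real_derivative (v * cos v - sin v) / v\<^sup>2) (at v)"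
    using v assms by (auto intro!: derivative_eq_intros simp: power2_eq_square)
  moreover have "(v * cos v - sin v) / v\<^sup>2 < 0"
    using mult_cos_less_sin[of v] v assms by (intro divide_neg_pos) auto
  ultimately show "\<exists>y. ((\<lambda>v. sin v / v) has_real_derivative y) (at v) \<and> y < 0" by blast
qed (use assms in \<open>intro continuous_intros; auto\<close>)

lemma mult_sin_less_self_after:
  fixes c t t' :: real
  assumes "0 < c" "0 < t" "t < t'" "t' \<le> pi/2" "2 * c * sin t \<le> t"
  shows "2 * c * sin t' < t'"
proof -
  have "2 * c * (sin t' / t') < 2 * c * (sin t / t)"
    using mult_strict_left_mono[OF sin_div_strict_decreasing[OF assms(2-4)], of "2 * c"] assms(1)
    by simp
  also have "\<dots> \<le> 1" using assms(2,5) by (simp add: field_simps)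
  finally show ?thesis using assms by (simp add: field_simps)
qed

lemma mult_sin_sign_change:
  fixes c :: real
  assumes "1/2 < c"
  obtains u0 where "0 < u0" "u0 \<le> pi/2"
    "\<And>t. 0 < t \<Longrightarrow> t < u0 \<Longrightarrow> t < 2 * c * sin t"
    "\<And>t. u0 < t \<Longrightarrow> t \<le> pi/2 \<Longrightarrow> 2 * c * sin t < t"
proof -
  let ?q = "\<lambda>t. 2 * c * sin t - t"
  have positive_before: "?q t > 0" if "0 < t" "t < s" "s \<le> pi/2" "?q s \<ge> 0" for t s
    using mult_sin_less_self_after[of c t s] that assms by fastforce
  show ?thesis
  proof (cases "?q (pi/2) \<ge> 0")
    case True
    then show ?thesis using positive_before by (intro that[of "pi/2"]) fastforce+
  next
    case False
    have "(?q has_real_derivative 2 * c * cos 0 - 1) (at 0)"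
      by (auto intro!: derivative_eq_intros)
    then obtain e where e: "e > 0" "\<And>h. 0 < h \<Longrightarrow> h < e \<Longrightarrow> ?q 0 < ?q (0 + h)"
      using DERIV_pos_inc_right[of ?q] assms by force
    define d where "d = min (e/2) (pi/2)"
    have d: "0 < d" "d \<le> pi/2" "?q d > 0" using e unfolding d_def by auto
    obtain u0 where u0: "d \<le> u0" "u0 \<le> pi/2" "?q u0 = 0"
      using IVT2'[of ?q "pi/2" 0 d] False d by (force intro: continuous_intros)
    then show ?thesis
      using positive_before mult_sin_less_self_after[of c u0] d assms
      by (intro that[of u0]) fastforce+
  qed
qed

lemma angle_profile_numer_increasing:
  assumes "0 \<le> a" "a < b" "b \<le> pi" "\<And>t. a < t \<Longrightarrow> t < b \<Longrightarrow> t < 2 * c * sin t"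
  shows "angle_profile_numer c a < angle_profile_numer c b"
proof (rule DERIV_pos_imp_increasing_open[OF assms(2)])
  fix t assume t: "a < t" "t < b"
  have "sin t > 0" using t assms by (intro sin_gt_zero) auto
  then show "\<exists>y. (angle_profile_numer c has_real_derivative y) (at t) \<and> y > 0"
    using has_real_derivative_angle_profile_numer assms(4)[OF t] by force
qed (rule continuous_on_angle_profile_numer)

lemma angle_profile_numer_decreasing:
  assumes "0 \<le> a" "a < b" "b \<le> pi" "\<And>t. a < t \<Longrightarrow> t < b \<Longrightarrow> 2 * c * sin t < t"
  shows "angle_profile_numer c b < angle_profile_numer c a"
proof (rule DERIV_neg_imp_decreasing_open[OF assms(2)])
  fix t assume t: "a < t" "t < b"
  have "sin t > 0" using t assms by (intro sin_gt_zero) auto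
  then show "\<exists>y. (angle_profile_numer c has_real_derivative y) (at t) \<and> y < 0"
    using has_real_derivative_angle_profile_numer assms(4)[OF t] by (force simp: mult_pos_neg)
qed (rule continuous_on_angle_profile_numer)

lemma angle_profile_mono:
  assumes "0 < a" "a \<le> b" "b \<le> pi/2" "-1 < c"
    "\<And>t. a < t \<Longrightarrow> t < b \<Longrightarrow> 0 \<le> angle_profile_numer c t"
  shows "angle_profile c a \<le> angle_profile c b"
proof (rule DERIV_nonneg_imp_increasing_open[OF assms(2)])
  fix t assume t: "a < t" "t < b"
  have "sin t > 0" using t assms by (intro sin_gt_zero) auto
  moreover have "1 + c * cos t > 0" using t assms by (intro one_plus_mult_cos_pos cos_ge_zero) auto
  ultimately show "\<exists>y. (angle_profile c has_real_derivative y) (at t) \<and> y \<ge> 0"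
    using has_real_derivative_angle_profile[of t c] assms(5)[OF t] t assms by force
qed (rule continuous_on_angle_profile[OF assms(1,3,4)])

lemma angle_profile_antimono:
  assumes "0 < a" "a \<le> b" "b \<le> pi/2" "-1 < c"
    "\<And>t. a < t \<Longrightarrow> t < b \<Longrightarrow> angle_profile_numer c t \<le> 0"
  shows "angle_profile c b \<le> angle_profile c a"
proof (rule DERIV_nonpos_imp_decreasing_open[OF assms(2)])
  fix t assume t: "a < t" "t < b"
  have "sin t > 0" using t assms by (intro sin_gt_zero) auto
  moreover have "1 + c * cos t > 0" using t assms by (intro one_plus_mult_cos_pos cos_ge_zero) auto
  ultimately show "\<exists>y. (angle_profile c has_real_derivative y) (at t) \<and> y \<le> 0"
    using has_real_derivative_angle_profile[of t c] assms(5)[OF t] t assms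
    by (force simp: divide_nonpos_pos)
qed (rule continuous_on_angle_profile[OF assms(1,3,4)])

lemma angle_profile_numer_unimodal:
  assumes "1/2 < c"
  obtains u0 where "0 < u0" "u0 \<le> pi/2"
    "\<And>t. 0 < t \<Longrightarrow> t \<le> u0 \<Longrightarrow> 0 < angle_profile_numer c t"
    "\<And>t s. u0 \<le> t \<Longrightarrow> t < s \<Longrightarrow> s \<le> pi/2 \<Longrightarrow> angle_profile_numer c s < angle_profile_numer c t"
proof -
  obtain u0 where u0: "0 < u0" "u0 \<le> pi/2"
    "\<And>t. 0 < t \<Longrightarrow> t < u0 \<Longrightarrow> t < 2 * c * sin t"
    "\<And>t. u0 < t \<Longrightarrow> t \<le> pi/2 \<Longrightarrow> 2 * c * sin t < t"
    using mult_sin_sign_change[OF assms] by blast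
  show ?thesis
  proof (rule that[OF u0(1,2)])
    fix t assume "0 < t" "t \<le> u0"
    then show "0 < angle_profile_numer c t"
      using angle_profile_numer_increasing[of 0 t c] u0 by fastforce
  next
    fix t s assume "u0 \<le> t" "t < s" "s \<le> pi/2"
    then show "angle_profile_numer c s < angle_profile_numer c t"
      using angle_profile_numer_decreasing[of t s c] u0 by fastforce
  qed
qed

lemma angle_profile_numer_nonneg:
  assumes "2/pi \<le> c" "0 < u" "u \<le> pi/2"
  shows "0 \<le> angle_profile_numer c u"
proof -
  have "1/2 < 2/pi" using pi_less_4 by (simp add: field_simps)
  then have "1/2 < c" using assms(1) by linarith
  then obtain u0 where u0: "0 < u0" "u0 \<le> pi/2"
    and rising: "\<And>t. 0 < t \<Longrightarrow> t \<le> u0 \<Longrightarrow> 0 < angle_profile_numer c t"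
    and falling: "\<And>t s. u0 \<le> t \<Longrightarrow> t < s \<Longrightarrow> s \<le> pi/2 \<Longrightarrow>
      angle_profile_numer c s < angle_profile_numer c t"
    by (rule angle_profile_numer_unimodal) blast
  have end_nonneg: "0 \<le> angle_profile_numer c (pi/2)" using assms(1) by (simp add: field_simps)
  consider "u \<le> u0" | "u0 < u" "u < pi/2" | "u = pi/2" using assms(3) by linarith
  then show ?thesis
  proof cases
    case 1
    then show ?thesis using rising[of u] assms(2) by simp
  next
    case 2
    then show ?thesis using falling[of u "pi/2"] end_nonneg by linarith
  next
    case 3
    show ?thesis unfolding 3 by (rule end_nonneg)
  qed
qed

lemma angle_profile_numer_unique_root:
  assumes "1/2 < c" "c < 2/pi"
  obtains u1 where "0 < u1" "u1 < pi/2" "angle_profile_numer c u1 = 0"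
    "\<And>t. 0 < t \<Longrightarrow> t < u1 \<Longrightarrow> 0 < angle_profile_numer c t"
    "\<And>t. u1 < t \<Longrightarrow> t \<le> pi/2 \<Longrightarrow> angle_profile_numer c t < 0"
proof -
  obtain u0 where u0: "0 < u0" "u0 \<le> pi/2"
    and rising: "\<And>t. 0 < t \<Longrightarrow> t \<le> u0 \<Longrightarrow> 0 < angle_profile_numer c t"
    and falling: "\<And>t s. u0 \<le> t \<Longrightarrow> t < s \<Longrightarrow> s \<le> pi/2 \<Longrightarrow>
      angle_profile_numer c s < angle_profile_numer c t"
    by (rule angle_profile_numer_unimodal[OF assms(1)]) blast
  have end_neg: "angle_profile_numer c (pi/2) < 0" using assms(2) by (simp add: field_simps)
  moreover have "0 < angle_profile_numer c u0" using rising u0 by simp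
  ultimately have "u0 < pi/2" using u0(2) by (cases "u0 = pi/2") auto
  then obtain u1 where u1: "u0 \<le> u1" "u1 \<le> pi/2" "angle_profile_numer c u1 = 0"
    using IVT2'[of "angle_profile_numer c" "pi/2" 0 u0] rising[of u0] end_neg u0
      continuous_on_angle_profile_numer by fastforce
  have "u0 \<noteq> u1" "u1 \<noteq> pi/2"
    using u1(3) rising[of u0] end_neg u0 by (metis less_irrefl order_refl)+
  then have "u0 < u1" "u1 < pi/2" using u1 by auto
  show ?thesis
  proof (rule that[of u1])
    fix t assume "0 < t" "t < u1"
    then show "0 < angle_profile_numer c t"
      using rising[of t] falling[of t u1] u1 \<open>u1 < pi/2\<close> by (cases "t \<le> u0") auto
  next
    fix t assume "u1 < t" "t \<le> pi/2"
    then show "angle_profile_numer c t < 0" using falling[of u1 t] u1 by auto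
  qed (use u1 \<open>u0 < u1\<close> \<open>u1 < pi/2\<close> u0 in auto)
qed

lemma angle_profile_numer_nonpos:
  assumes "c \<le> 1/2" "0 \<le> u" "u \<le> pi/2"
  shows "angle_profile_numer c u \<le> 0"
proof (rule DERIV_nonpos_imp_decreasing_open[where a = 0, OF assms(2), THEN order.trans])
  fix t :: real assume t: "0 < t" "t < u"
  have "sin t \<ge> 0" using t assms by (intro sin_ge_zero) auto
  then have "2 * c * sin t \<le> sin t" using mult_right_mono[of "2 * c" 1 "sin t"] assms(1) by simp
  also have "\<dots> \<le> t" using t by (intro sin_x_le_x) auto
  finally have "sin t * (2 * c * sin t - t) \<le> 0"
    using \<open>sin t \<ge> 0\<close> by (simp add: mult_nonneg_nonpos)
  then show "\<exists>y. (angle_profile_numer c has_real_derivative y) (at t) \<and> y \<le> 0"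
    using has_real_derivative_angle_profile_numer by blast
qed (auto intro: continuous_on_angle_profile_numer)

subsection \<open>The supremum of the profile\<close>

lemma SUP_ereal_eq_tendsto:
  fixes f :: "'a \<Rightarrow> real"
  assumes "\<And>u. u \<in> A \<Longrightarrow> f u \<le> E" "(f \<longlongrightarrow> E) F" "eventually (\<lambda>u. u \<in> A) F" "F \<noteq> bot"
  shows "(SUP u\<in>A. ereal (f u)) = ereal E"
proof (rule order.antisym)
  show "(SUP u\<in>A. ereal (f u)) \<le> ereal E" using assms(1) by (simp add: SUP_least)
  have "((\<lambda>u. ereal (f u)) \<longlongrightarrow> ereal E) F" using assms(2) by (rule tendsto_ereal)
  moreover have "eventually (\<lambda>u. ereal (f u) \<le> (SUP u\<in>A. ereal (f u))) F"
    using assms(3) by eventually_elim (rule SUP_upper)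
  ultimately show "ereal E \<le> (SUP u\<in>A. ereal (f u))"
    by (rule tendsto_le[OF assms(4) tendsto_const])
qed

lemma SUP_angle_profile_eq_0:
  assumes "2/pi \<le> c"
  shows "(SUP u\<in>{0<..<pi/2}. ereal (angle_profile c u)) = 0"
proof -
  have "-1 < c" using assms by (smt (verit) pi_gt_zero divide_pos_pos)
  have "angle_profile c u \<le> 0" if "u \<in> {0<..<pi/2}" for u
    using angle_profile_mono[of u "pi/2" c] angle_profile_numer_nonneg[OF assms] that \<open>-1 < c\<close>
    by fastforce
  moreover have "(angle_profile c \<longlongrightarrow> 0) (at_left (pi/2))"
    using DERIV_isCont[OF has_real_derivative_angle_profile[of "pi/2" c]] \<open>-1 < c\<close>
    by (auto simp: isCont_def filterlim_at_split)
  moreover have "eventually (\<lambda>u. u \<in> {0<..<pi/2}) (at_left (pi/2))"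
    by (intro eventually_at_left_real) simp
  ultimately show ?thesis
    unfolding zero_ereal_def by (intro SUP_ereal_eq_tendsto) auto
qed

lemma tendsto_angle_profile_at_right_0:
  assumes "-1 < c"
  shows "(angle_profile c \<longlongrightarrow> ln (pi / (2 * (1 + c)))) (at_right 0)"
proof -
  have "((\<lambda>v::real. sin v / v) \<longlongrightarrow> 1) (at 0)"
    using DERIV_sin[of 0] by (auto simp: has_field_derivative_def field_has_derivative_at)
  then have "((\<lambda>v::real. sin v / v) \<longlongrightarrow> 1) (at_right 0)"
    by (simp add: filterlim_at_split)
  then have "((\<lambda>v. ln pi - ln 2 + ln (sin v / v) - ln (1 + c * cos v)) \<longlongrightarrow>
      ln pi - ln 2 + ln 1 - ln (1 + c * cos 0)) (at_right 0)"
    using assms by (intro tendsto_intros) auto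
  moreover have "eventually (\<lambda>v. ln pi - ln 2 + ln (sin v / v) - ln (1 + c * cos v)
      = angle_profile c v) (at_right 0)"
    using eventually_at_right_real[OF pi_gt_zero]
  proof eventually_elim
    case (elim v)
    then have "0 < sin v" by (intro sin_gt_zero) auto
    then show ?case using elim by (simp add: angle_profile_def ln_div)
  qed
  moreover have "ln pi - ln 2 + ln 1 - ln (1 + c * cos 0) = ln (pi / (2 * (1 + c)))"
    using assms ln_mult[of 2 "1 + c"] by (simp add: ln_div)
  ultimately show ?thesis by (auto intro: Lim_transform_eventually)
qed

lemma SUP_angle_profile_eq_limit_at_0:
  assumes "-1 < c" "c \<le> 1/2"
  shows "(SUP u\<in>{0<..<pi/2}. ereal (angle_profile c u)) = ereal (ln (pi / (2 * (1 + c))))"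
proof (rule SUP_ereal_eq_tendsto)
  fix u assume u: "u \<in> {0<..<pi/2}"
  have "eventually (\<lambda>v. angle_profile c u \<le> angle_profile c v) (at_right 0)"
  proof -
    have "eventually (\<lambda>v. v \<in> {0<..<u}) (at_right 0)"
      using u by (intro eventually_at_right_real) simp
    then show ?thesis
    proof eventually_elim
      case (elim v)
      then show ?case
        using angle_profile_antimono[of v u c] angle_profile_numer_nonpos[OF assms(2)] assms u
        by fastforce
    qed
  qed
  then show "angle_profile c u \<le> ln (pi / (2 * (1 + c)))"
    using tendsto_angle_profile_at_right_0[OF assms(1)]
    by (intro tendsto_le[OF trivial_limit_at_right_real _ tendsto_const])
next
  show "eventually (\<lambda>u. u \<in> {0<..<pi/2}) (at_right 0)"
    by (intro eventually_at_right_real) simp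
qed (use tendsto_angle_profile_at_right_0 assms in auto)

lemma SUP_angle_profile_eq_at_root:
  assumes "-1 < c" "0 < u1" "u1 < pi/2"
    "\<And>t. 0 < t \<Longrightarrow> t < u1 \<Longrightarrow> 0 < angle_profile_numer c t"
    "\<And>t. u1 < t \<Longrightarrow> t \<le> pi/2 \<Longrightarrow> angle_profile_numer c t < 0"
  shows "(SUP u\<in>{0<..<pi/2}. ereal (angle_profile c u)) = ereal (angle_profile c u1)"
proof (rule SUP_eqI)
  fix u :: real assume u: "u \<in> {0<..<pi/2}"
  show "ereal (angle_profile c u) \<le> ereal (angle_profile c u1)"
  proof (cases "u \<le> u1")
    case True
    then show ?thesis
      using angle_profile_mono[of u u1 c] assms u by (fastforce intro: less_imp_le)
  next
    case False
    then show ?thesis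
      using angle_profile_antimono[of u1 u c] assms u by (fastforce intro: less_imp_le)
  qed
qed (use assms in \<open>auto intro: SUP_upper\<close>)

subsection \<open>Reduction to the profile\<close>

definition polar_dual :: "real \<Rightarrow> real \<Rightarrow> real \<Rightarrow> real \<times> real \<times> real" where
  "polar_dual a b u = (- sqrt (a * b) * cos u, (1 - a) / 2, (1 - b) / 2)"

lemma polar_dual_mem:
  assumes "0 < a" "0 < b" "0 < u" "u < pi/2"
  shows "polar_dual a b u \<in> {l \<in> SS. fst l < 0}"
proof -
  have "0 < sin u" "0 < cos u" using assms by (auto intro: sin_gt_zero cos_gt_zero)
  moreover have "Dd (polar_dual a b u) = - (a * b) * (sin u)\<^sup>2"
    using assms unfolding Dd_def polar_dual_def
    by (simp add: power_mult_distrib sin_squared_eq algebra_simps) (simp add: field_simps)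
  ultimately show ?thesis
    using assms unfolding SS_def polar_dual_def by (auto simp: mult_pos_pos)
qed

lemma polar_dual_surj:
  assumes "l \<in> {l \<in> SS. fst l < 0}"
  obtains a b u where "0 < a" "0 < b" "0 < u" "u < pi/2" "l = polar_dual a b u"
proof -
  obtain l1 l2 l3 where l: "l = (l1, l2, l3)" by (cases l)
  define a where "a = 1 - 2 * l2"
  define b where "b = 1 - 2 * l3"
  have ab: "0 < a" "0 < b" "l1 < 0" "l1\<^sup>2 < a * b"
    using assms unfolding l SS_def Dd_def a_def b_def by auto
  define m where "m = sqrt (a * b)"
  have m: "0 < m" "m\<^sup>2 = a * b" using ab unfolding m_def by auto
  have "l1\<^sup>2 < m\<^sup>2" using ab m by simp
  then have "- l1 < m" using power2_less_imp_less[of "- l1" m] m(1) by simp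
  then have w: "0 < - l1 / m" "- l1 / m < 1" using ab(3) m(1) by (simp_all add: field_simps)
  define u where "u = arccos (- l1 / m)"
  have "cos u = - l1 / m" unfolding u_def using w by (intro cos_arccos) auto
  then have "l1 = - m * cos u" using m by simp
  moreover have "0 < u" "u < pi/2"
    unfolding u_def using w arccos_lt_bounded[of "- l1 / m"] arccos_less_arccos[of 0 "- l1 / m"]
    by auto
  ultimately show ?thesis
    using ab by (intro that[of a b u]) (auto simp: l polar_dual_def a_def b_def m_def)
qed

lemma ip3_minus_Lam_polar_dual:
  assumes "0 < a" "0 < b" "0 < u" "u < pi/2"
  shows "ip3 (polar_dual a b u) (z1, z2, z3) - Lam (polar_dual a b u)
    = - sqrt (a * b) * cos u * z1 + (1 - a) / 2 * z2 + (1 - b) / 2 * z3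
      - ln (2 * u / pi) + ln (sqrt (a * b) * sin u)"
proof -
  define m where "m = sqrt (a * b)"
  have m: "0 < m" using assms unfolding m_def by simp
  have s: "0 < sin u" using assms by (intro sin_gt_zero) auto
  have D: "- Dd (polar_dual a b u) = (m * sin u)\<^sup>2"
    using assms unfolding Dd_def polar_dual_def m_def
    by (simp add: power_mult_distrib sin_squared_eq algebra_simps) (simp add: field_simps)
  have "arctan (tan (u - pi/2)) = u - pi/2" using assms by (intro arctan_tan) auto
  moreover have "tan (u - pi/2) = - cos u / sin u" by (simp add: tan_def sin_diff cos_diff)
  ultimately have "arctan (- m * cos u / sqrt ((m * sin u)\<^sup>2)) = u - pi/2"
    using m s by simp
  then have "pi + 2 * arctan (- m * cos u / sqrt ((m * sin u)\<^sup>2)) = 2 * u" by simp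
  moreover have "ln (2 * u) - ln pi = ln (2 * u / pi)" using assms by (simp add: ln_div)
  moreover have "1/2 * ln ((m * sin u)\<^sup>2) = ln (m * sin u)"
    using m s by (simp add: ln_realpow)
  ultimately show ?thesis
    unfolding ip3_def Lam_def D unfolding polar_dual_def m_def[symmetric] by simp
qed

text \<open>
  The gap to the bound is a square (AM-GM in \<open>a x\<^sup>2 + b y\<^sup>2\<close>) plus an instance of
  \<open>t - 1 - ln t \<ge> 0\<close> at \<open>t = \<surd>(ab) x y (1 + c cos u)\<close>.
\<close>

lemma polar_objective_gap:
  assumes "0 < x" "0 < y" "-1 < c" "0 < a" "0 < b" "0 < u" "u < pi/2"
  defines "t \<equiv> sqrt (a * b) * x * y * (1 + c * cos u)"
  shows "x\<^sup>2/2 + y\<^sup>2/2 - 1 - ln (x * y) + angle_profile c u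
      - (- sqrt (a * b) * cos u * (x * y * c) + (1 - a) / 2 * x\<^sup>2 + (1 - b) / 2 * y\<^sup>2
         - ln (2 * u / pi) + ln (sqrt (a * b) * sin u))
    = (sqrt a * x - sqrt b * y)\<^sup>2 / 2 + (t - 1 - ln t)"
proof -
  have s: "0 < sin u" using assms by (intro sin_gt_zero) auto
  have d: "0 < 1 + c * cos u" using assms by (intro one_plus_mult_cos_pos cos_ge_zero) auto
  have ab: "sqrt (a * b) = sqrt a * sqrt b" by (simp add: real_sqrt_mult)
  have ln_t: "ln t = ln (sqrt a) + ln (sqrt b) + ln x + ln y + ln (1 + c * cos u)"
    using assms d unfolding t_def ab by (simp add: ln_mult)
  have ln_m_sin: "ln (sqrt (a * b) * sin u) = ln (sqrt a) + ln (sqrt b) + ln (sin u)"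
    using assms s unfolding ab by (simp add: ln_mult)
  have ln_u: "ln (2 * u / pi) = ln 2 + ln u - ln pi" using assms by (simp add: ln_div ln_mult)
  have ln_xy: "ln (x * y) = ln x + ln y" using assms by (simp add: ln_mult)
  have square: "(sqrt a * x - sqrt b * y)\<^sup>2 = a * x\<^sup>2 + b * y\<^sup>2 - 2 * (sqrt a * sqrt b * x * y)"
    using assms by (simp add: power2_diff power_mult_distrib)
  show ?thesis
    unfolding angle_profile_def ln_t ln_m_sin ln_u ln_xy square unfolding t_def ab
    by (simp add: algebra_simps add_divide_distrib diff_divide_distrib)
qed

lemma dual_objective_le_angle_profile:
  assumes "0 < x" "0 < y" "-1 < c" "l \<in> {l \<in> SS. fst l < 0}"
  shows "\<exists>u\<in>{0<..<pi/2}.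
    ip3 l (x * y * c, x\<^sup>2, y\<^sup>2) - Lam l \<le> x\<^sup>2/2 + y\<^sup>2/2 - 1 - ln (x * y) + angle_profile c u"
proof -
  obtain a b u where abu: "0 < a" "0 < b" "0 < u" "u < pi/2" "l = polar_dual a b u"
    using assms(4) by (rule polar_dual_surj)
  define t where "t = sqrt (a * b) * x * y * (1 + c * cos u)"
  have "0 < 1 + c * cos u" using assms abu by (intro one_plus_mult_cos_pos cos_ge_zero) auto
  then have "0 < t" using assms abu unfolding t_def by simp
  then have "0 \<le> (sqrt a * x - sqrt b * y)\<^sup>2 / 2 + (t - 1 - ln t)"
    using ln_le_minus_one[of t] by simp
  then have "ip3 l (x * y * c, x\<^sup>2, y\<^sup>2) - Lam l
      \<le> x\<^sup>2/2 + y\<^sup>2/2 - 1 - ln (x * y) + angle_profile c u"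
    using polar_objective_gap[OF assms(1-3) abu(1-4)]
    unfolding abu(5) ip3_minus_Lam_polar_dual[OF abu(1-4)] t_def by linarith
  then show ?thesis using abu(3,4) by auto
qed

lemma dual_objective_attains_angle_profile:
  assumes "0 < x" "0 < y" "-1 < c" "0 < u" "u < pi/2"
  shows "\<exists>l\<in>{l \<in> SS. fst l < 0}.
    ip3 l (x * y * c, x\<^sup>2, y\<^sup>2) - Lam l = x\<^sup>2/2 + y\<^sup>2/2 - 1 - ln (x * y) + angle_profile c u"
proof -
  define d where "d = 1 + c * cos u"
  have d: "0 < d" unfolding d_def using assms by (intro one_plus_mult_cos_pos cos_ge_zero) auto
  define a where "a = 1 / (x\<^sup>2 * d)"
  define b where "b = 1 / (y\<^sup>2 * d)"
  have ab: "0 < a" "0 < b" using assms d unfolding a_def b_def by auto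
  have "sqrt a * x = sqrt b * y" "sqrt (a * b) * x * y * d = 1"
    using assms d unfolding a_def b_def by (simp_all add: real_sqrt_divide real_sqrt_mult field_simps)
  then show ?thesis
    using polar_objective_gap[OF assms(1-3) ab assms(4,5)] ip3_minus_Lam_polar_dual[OF ab assms(4,5)]
      polar_dual_mem[OF ab assms(4,5)]
    by (intro bexI[of _ "polar_dual a b u"]) (simp_all add: d_def)
qed

lemma LamStarMinus_eq_SUP_angle_profile:
  assumes "0 < x" "0 < y" "-1 < c"
  shows "LamStarMinus (x * y * c, x\<^sup>2, y\<^sup>2)
    = ereal (x\<^sup>2/2 + y\<^sup>2/2 - 1 - ln (x * y)) + (SUP u\<in>{0<..<pi/2}. ereal (angle_profile c u))"
proof -
  let ?C = "x\<^sup>2/2 + y\<^sup>2/2 - 1 - ln (x * y)"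
  have "LamStarMinus (x * y * c, x\<^sup>2, y\<^sup>2) = (SUP u\<in>{0<..<pi/2}. ereal (?C + angle_profile c u))"
    unfolding LamStarMinus_def
  proof (rule SUP_eq)
    fix l assume "l \<in> {l \<in> SS. fst l < 0}"
    then show "\<exists>u\<in>{0<..<pi/2}. ereal (ip3 l (x * y * c, x\<^sup>2, y\<^sup>2) - Lam l)
        \<le> ereal (?C + angle_profile c u)"
      using dual_objective_le_angle_profile[OF assms] by simp
  next
    fix u :: real assume "u \<in> {0<..<pi/2}"
    then show "\<exists>l\<in>{l \<in> SS. fst l < 0}. ereal (?C + angle_profile c u)
        \<le> ereal (ip3 l (x * y * c, x\<^sup>2, y\<^sup>2) - Lam l)"
      using dual_objective_attains_angle_profile[OF assms] by fastforce
  qed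
  also have "\<dots> = (SUP u\<in>{0<..<pi/2}. ereal ?C + ereal (angle_profile c u))" by simp
  also have "\<dots> = ereal ?C + (SUP u\<in>{0<..<pi/2}. ereal (angle_profile c u))"
    by (intro SUP_ereal_add_right) (use pi_gt3 in auto)
  finally show ?thesis .
qed

subsection \<open>The middle regime and \<open>\<beta>\<^sub>1\<close>\<close>

lemma beta_equation_iff_angle_profile_numer_eq_0:
  assumes "0 \<le> c" "0 < v" "v < pi/2"
  defines "b \<equiv> 1 / cos v"
  shows "arccos (1 / b) = (b + c) * sqrt (b\<^sup>2 - 1) / (b * (b * c + 1))
    \<longleftrightarrow> angle_profile_numer c v = 0"
proof -
  have co: "0 < cos v" "cos v < 1" and si: "0 < sin v"
    using assms cos_monotone_0_pi[of 0 v] by (auto intro: cos_gt_zero sin_gt_zero)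
  have lhs: "arccos (1 / b) = v" unfolding b_def using assms by (simp add: arccos_cos)
  have "sqrt (b\<^sup>2 - 1) = sin v / cos v"
    using co si unfolding b_def
    by (intro real_sqrt_unique) (auto simp: field_simps sin_squared_eq)
  moreover have "b + c = (1 + c * cos v) / cos v" "b * (b * c + 1) = (cos v + c) / (cos v)\<^sup>2"
    using co unfolding b_def by (simp_all add: field_simps power2_eq_square)
  moreover have "e / cos v * (sin v / cos v) / (q / (cos v)\<^sup>2) = sin v * e / q" for e q
    using co by (simp add: field_simps power2_eq_square)
  ultimately have rhs: "(b + c) * sqrt (b\<^sup>2 - 1) / (b * (b * c + 1))
      = sin v * (1 + c * cos v) / (cos v + c)"
    by simp
  have "0 < cos v + c" using co assms by simp
  then show ?thesis
    unfolding lhs rhs angle_profile_numer_def by (simp add: field_simps)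
qed

lemma beta1_eq_inverse_cos_root:
  assumes "0 < \<theta>" "\<theta> < pi/2" "0 < u1" "u1 < pi/2"
    "\<And>t. 0 < t \<Longrightarrow> t < pi/2 \<Longrightarrow> angle_profile_numer (cos \<theta>) t = 0 \<longleftrightarrow> t = u1"
  shows "beta1 \<theta> = 1 / cos u1"
  unfolding beta1_def
proof (rule the_equality)
  have "0 \<le> cos \<theta>" using assms by (intro cos_ge_zero) auto
  have "cos u1 < 1" "0 < cos u1"
    using assms cos_monotone_0_pi[of 0 u1] by (auto intro: cos_gt_zero)
  then show "1 < 1 / cos u1 \<and> arccos (1 / (1 / cos u1)) = (1 / cos u1 + cos \<theta>)
      * sqrt ((1 / cos u1)\<^sup>2 - 1) / (1 / cos u1 * (1 / cos u1 * cos \<theta> + 1))"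
    using beta_equation_iff_angle_profile_numer_eq_0[OF \<open>0 \<le> cos \<theta>\<close>] assms by simp
next
  fix b assume b: "1 < b \<and> arccos (1 / b)
    = (b + cos \<theta>) * sqrt (b\<^sup>2 - 1) / (b * (b * cos \<theta> + 1))"
  define v where "v = arccos (1 / b)"
  have ib: "0 < 1 / b" "1 / b < 1" using b by auto
  then have "-1 < 1 / b" by linarith
  have "0 < v" using arccos_lt_bounded[OF \<open>-1 < 1 / b\<close> ib(2)] unfolding v_def by simp
  moreover have "v < pi/2" using arccos_less_arccos[of 0 "1 / b"] ib unfolding v_def by simp
  moreover have "cos v = 1 / b"
    unfolding v_def by (rule cos_arccos) (use ib \<open>-1 < 1 / b\<close> in linarith)+
  then have "b = 1 / cos v" using ib by simp
  moreover have "0 \<le> cos \<theta>" using assms by (intro cos_ge_zero) auto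
  ultimately show "b = 1 / cos u1"
    using beta_equation_iff_angle_profile_numer_eq_0[of "cos \<theta>" v] assms b by auto
qed

lemma angle_profile_at_numer_zero:
  assumes "0 \<le> c" "0 < u1" "u1 < pi/2" "angle_profile_numer c u1 = 0"
  defines "b \<equiv> 1 / cos u1"
  shows "angle_profile c u1 = ln (pi * b * (b * c + 1) / (2 * (c + b)\<^sup>2))"
proof -
  have co: "0 < cos u1" and si: "0 < sin u1"
    using assms by (auto intro: cos_gt_zero sin_gt_zero)
  define d where "d = 1 + c * cos u1"
  have d: "0 < d" using co assms unfolding d_def by (simp add: add_pos_nonneg)
  have cc: "0 < cos u1 + c" using co assms by simp
  have "u1 = sin u1 * d / (cos u1 + c)"
    using assms(4) cc unfolding angle_profile_numer_def d_def by (simp add: field_simps)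
  then have "ln u1 = ln (sin u1 * d / (cos u1 + c))" by (rule arg_cong)
  also have "\<dots> = ln (sin u1) + ln d - ln (cos u1 + c)"
    using si d cc by (simp add: ln_mult ln_div)
  finally have "ln u1 = ln (sin u1) + ln d - ln (cos u1 + c)" .
  moreover have "pi * b * (b * c + 1) / (2 * (c + b)\<^sup>2) = pi * (cos u1 + c) / (2 * d\<^sup>2)"
  proof -
    have "b * c + 1 = (cos u1 + c) / cos u1" "c + b = d / cos u1"
      using co unfolding b_def d_def by (simp_all add: field_simps)
    then show ?thesis using co d unfolding b_def by (simp add: field_simps power2_eq_square)
  qed
  moreover have "ln (pi * (cos u1 + c) / (2 * d\<^sup>2)) = ln pi + ln (cos u1 + c) - ln 2 - 2 * ln d"
    using cc d by (simp add: ln_mult ln_div ln_realpow)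
  ultimately show ?thesis unfolding angle_profile_def d_def by simp
qed

lemma SUP_angle_profile_eq_beta1:
  assumes "0 < \<theta>" "\<theta> < pi/2" "1/2 < cos \<theta>" "cos \<theta> < 2/pi"
  shows "(SUP u\<in>{0<..<pi/2}. ereal (angle_profile (cos \<theta>) u))
    = ereal (ln (pi * beta1 \<theta> * (beta1 \<theta> * cos \<theta> + 1) / (2 * (cos \<theta> + beta1 \<theta>)\<^sup>2)))"
proof -
  obtain u1 where u1: "0 < u1" "u1 < pi/2" "angle_profile_numer (cos \<theta>) u1 = 0"
    "\<And>t. 0 < t \<Longrightarrow> t < u1 \<Longrightarrow> 0 < angle_profile_numer (cos \<theta>) t"
    "\<And>t. u1 < t \<Longrightarrow> t \<le> pi/2 \<Longrightarrow> angle_profile_numer (cos \<theta>) t < 0"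
    using angle_profile_numer_unique_root[OF assms(3,4)] by blast
  have "angle_profile_numer (cos \<theta>) t = 0 \<longleftrightarrow> t = u1" if "0 < t" "t < pi/2" for t
    using u1(3) u1(4)[of t] u1(5)[of t] that by (cases t u1 rule: linorder_cases) auto
  then have "beta1 \<theta> = 1 / cos u1"
    using beta1_eq_inverse_cos_root[OF assms(1,2) u1(1,2)] by blast
  moreover have "0 \<le> cos \<theta>" "-1 < cos \<theta>" using assms(3) by linarith+
  ultimately show ?thesis
    using SUP_angle_profile_eq_at_root[of "cos \<theta>" u1] angle_profile_at_numer_zero[of "cos \<theta>" u1] u1
    by simp
qed

lemma le_arccos_iff_le_cos:
  fixes y \<theta> :: real
  assumes "-1 \<le> y" "y \<le> 1" "0 \<le> \<theta>" "\<theta> \<le> pi"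
  shows "\<theta> \<le> arccos y \<longleftrightarrow> y \<le> cos \<theta>" and "\<theta> < arccos y \<longleftrightarrow> y < cos \<theta>"
  using cos_mono_le_eq[of "arccos y" \<theta>] cos_mono_less_eq[of "arccos y" \<theta>] arccos[OF assms(1,2)]
    assms(3,4)
  by auto

definition rate_correction :: "real \<Rightarrow> real" where
  "rate_correction \<theta> =
    (if \<theta> \<le> arccos (2/pi) then 0
     else if \<theta> < pi/3 then
       ln (pi * beta1 \<theta> * (beta1 \<theta> * cos \<theta> + 1) / (2 * (cos \<theta> + beta1 \<theta>)\<^sup>2))
     else ln (pi / (2 * (1 + cos \<theta>))))"

lemma SUP_angle_profile_cos_eq_rate_correction:
  assumes "0 < \<theta>" "\<theta> < pi/2"
  shows "(SUP u\<in>{0<..<pi/2}. ereal (angle_profile (cos \<theta>) u)) = ereal (rate_correction \<theta>)"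
proof -
  have "1/2 < 2/pi" "2/pi \<le> 1" "-1 \<le> 2/pi"
    using pi_less_4 pi_gt3 pi_gt_zero by (simp_all add: field_simps)
  then have regimes: "\<theta> \<le> arccos (2/pi) \<longleftrightarrow> 2/pi \<le> cos \<theta>" "\<theta> < pi/3 \<longleftrightarrow> 1/2 < cos \<theta>"
    using le_arccos_iff_le_cos[of "2/pi" \<theta>] le_arccos_iff_le_cos[of "1/2" \<theta>] assms by simp_all
  have "0 < cos \<theta>" using assms by (intro cos_gt_zero) auto
  consider "2/pi \<le> cos \<theta>" | "1/2 < cos \<theta>" "cos \<theta> < 2/pi" | "cos \<theta> \<le> 1/2" by linarith
  then show ?thesis
  proof cases
    case 1
    then show ?thesis using regimes SUP_angle_profile_eq_0 by (simp add: rate_correction_def)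
  next
    case 2
    then show ?thesis
      using regimes SUP_angle_profile_eq_beta1[OF assms] by (simp add: rate_correction_def)
  next
    case 3
    then show ?thesis
      using regimes \<open>1/2 < 2/pi\<close> \<open>0 < cos \<theta>\<close> SUP_angle_profile_eq_limit_at_0[of "cos \<theta>"]
      by (simp add: rate_correction_def)
  qed
qed

theorem lemma10:
  fixes x y \<theta> :: real
  assumes "x > 0" and "y > 0" and "0 < \<theta>" and "\<theta> < pi/2"
  shows "LamStarMinus (x*y*cos \<theta>, x^2, y^2) =
    ereal (x^2/2 + y^2/2 - 1 - ln (x*y) +
      (if \<theta> \<le> arccos (2/pi) then 0
       else if \<theta> < pi/3 then
         ln (pi * beta1 \<theta> * (beta1 \<theta> * cos \<theta> + 1) / (2 * (cos \<theta> + beta1 \<theta>)^2))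
       else ln (pi / (2 * (1 + cos \<theta>)))))"
proof -
  have "0 < cos \<theta>" using assms by (intro cos_gt_zero) auto
  then have "-1 < cos \<theta>" by linarith
  then have "LamStarMinus (x * y * cos \<theta>, x\<^sup>2, y\<^sup>2)
      = ereal (x\<^sup>2/2 + y\<^sup>2/2 - 1 - ln (x * y)) + ereal (rate_correction \<theta>)"
    using LamStarMinus_eq_SUP_angle_profile[OF assms(1,2)]
      SUP_angle_profile_cos_eq_rate_correction[OF assms(3,4)] by simp
  then show ?thesis unfolding rate_correction_def by simp
qed

end
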